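(* Let $J:[0,\infty)\to\mathbb R$ be a concave, nondecreasing function with $J(0)=0$. Let $r\in(0,2)$ and $A,B>0$, and suppose $z>0$ satisfies $z^2\le A^2+B^2J(z^r)$. Then $$J(z)\le C\,J(A)\Bigl[1+J(A^r)\Bigl(\frac BA\Bigr)^2\Bigr]^{1/(2-r)},$$ where $C$ is a constant depending only on $r$. *)

theory Defs
  imports "HOL-Analysis.Analysis"
begin

end

theory Submission
  imports Defs
begin

text \<open>
  For \<open>t = z/A \<ge> 1\<close>, concavity and \<open>J 0 = 0\<close> give \<open>J z \<le> t * J A\<close> and
  \<open>J (z powr r) \<le> t powr r * J (A powr r)\<close>. Dividing the hypothesis by \<open>A\<^sup>2\<close> yields
  \<open>t\<^sup>2 \<le> 1 + t powr r * X\<close> with \<open>X = J (A powr r) * (B/A)\<^sup>2\<close>, hence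
  \<open>t powr (2 - r) \<le> 1 + X\<close> since \<open>r < 2\<close>. So the constant \<open>C = 1\<close> works.
\<close>

lemma concave_on_le_ratio_mult:
  fixes J :: "real \<Rightarrow> real"
  assumes "concave_on {0..} J" "J 0 = 0" "0 < a" "a \<le> b"
  shows "J b \<le> (b / a) * J a"
proof -
  have "b > 0" using assms by linarith
  have "(1 - a/b) * J 0 + (a/b) * J b \<le> J ((1 - a/b) *\<^sub>R 0 + (a/b) *\<^sub>R b)"
    by (rule concave_onD[OF assms(1)]) (use assms \<open>b > 0\<close> in auto)
  hence "(a/b) * J b \<le> J a" using \<open>b > 0\<close> \<open>J 0 = 0\<close> by simp
  thus ?thesis using assms \<open>b > 0\<close> by (simp add: field_simps)
qed

lemma mono_on_nonneg:
  fixes J :: "real \<Rightarrow> real"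
  assumes "mono_on {0..} J" "J 0 = 0" "0 \<le> x"
  shows "0 \<le> J x"
  using assms by (metis atLeast_iff mono_onD order_refl)

lemma le_powr_inverse_if_sq_le:
  fixes t r X :: real
  assumes "1 \<le> t" "0 \<le> r" "r < 2" "0 \<le> X" "t\<^sup>2 \<le> 1 + t powr r * X"
  shows "t \<le> (1 + X) powr (1 / (2 - r))"
proof -
  have "t powr 2 \<le> 1 + t powr r * X"
    using assms by (simp add: powr_numeral)
  also have "\<dots> \<le> t powr r * (1 + X)"
    using assms by (simp add: ge_one_powr_ge_zero algebra_simps)
  finally have "t powr (2 - r) \<le> 1 + X"
    using assms by (simp add: powr_diff divide_le_eq mult.commute)
  hence "(t powr (2 - r)) powr (1 / (2 - r)) \<le> (1 + X) powr (1 / (2 - r))"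
    using assms by (intro powr_mono2) auto
  thus ?thesis using assms by (simp add: powr_powr)
qed

lemma ratio_le_powr_if_concave_sq_bound:
  fixes J :: "real \<Rightarrow> real"
  assumes "concave_on {0..} J" "mono_on {0..} J" "J 0 = 0" "0 < r" "r < 2"
    and "0 < A" "A \<le> z" "z\<^sup>2 \<le> A\<^sup>2 + B\<^sup>2 * J (z powr r)"
  shows "z / A \<le> (1 + J (A powr r) * (B / A)\<^sup>2) powr (1 / (2 - r))"
proof (rule le_powr_inverse_if_sq_le)
  let ?t = "z / A" and ?X = "J (A powr r) * (B / A)\<^sup>2"
  have "A powr r \<le> z powr r" using assms by (intro powr_mono2) auto
  hence "J (z powr r) \<le> (z powr r / A powr r) * J (A powr r)"
    using concave_on_le_ratio_mult[OF assms(1,3)] assms(6) by simp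
  also have "z powr r / A powr r = ?t powr r"
    using assms by (simp add: powr_divide)
  finally have "B\<^sup>2 * J (z powr r) \<le> B\<^sup>2 * (?t powr r * J (A powr r))"
    by (simp add: mult_left_mono)
  moreover have "A\<^sup>2 * (1 + ?t powr r * ?X) = A\<^sup>2 + B\<^sup>2 * (?t powr r * J (A powr r))"
    using assms(6) by (simp add: power_divide field_simps)
  moreover have "A\<^sup>2 * ?t\<^sup>2 = z\<^sup>2"
    using assms(6) by (simp add: power_divide)
  ultimately have "A\<^sup>2 * ?t\<^sup>2 \<le> A\<^sup>2 * (1 + ?t powr r * ?X)"
    using assms(8) by linarith
  thus "?t\<^sup>2 \<le> 1 + ?t powr r * ?X" using assms(6) by simp
  show "1 \<le> ?t" "0 \<le> r" "r < 2" using assms by auto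
  show "0 \<le> ?X" using mono_on_nonneg[OF assms(2,3)] by simp
qed

theorem lemma2p2:
  fixes r :: real
  assumes "0 < r" "r < 2"
  shows "\<exists>C > 0. \<forall>(J :: real \<Rightarrow> real) A B z.
           concave_on {0..} J \<longrightarrow> mono_on {0..} J \<longrightarrow> J 0 = 0 \<longrightarrow>
           A > 0 \<longrightarrow> B > 0 \<longrightarrow> z > 0 \<longrightarrow>
           z\<^sup>2 \<le> A\<^sup>2 + B\<^sup>2 * J (z powr r) \<longrightarrow>
           J z \<le> C * J A * (1 + J (A powr r) * (B / A)\<^sup>2) powr (1 / (2 - r))"
proof (rule exI[of _ 1], intro conjI allI impI)
  fix J :: "real \<Rightarrow> real" and A B z :: real
  assume conc: "concave_on {0..} J" and mono: "mono_on {0..} J" and "J 0 = 0"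
    and "A > 0" "B > 0" "z > 0" and hyp: "z\<^sup>2 \<le> A\<^sup>2 + B\<^sup>2 * J (z powr r)"
  define K where "K = (1 + J (A powr r) * (B / A)\<^sup>2) powr (1 / (2 - r))"
  have "0 \<le> J A" "0 \<le> J (A powr r)"
    using mono_on_nonneg[OF mono \<open>J 0 = 0\<close>] \<open>A > 0\<close> by auto
  hence "1 \<le> K" unfolding K_def using assms by (intro ge_one_powr_ge_zero) auto
  have "J z \<le> K * J A"
  proof (cases "z \<le> A")
    case True
    hence "J z \<le> J A" using \<open>z > 0\<close> by (intro mono_onD[OF mono]) auto
    also have "\<dots> \<le> K * J A"
      using mult_right_mono[OF \<open>1 \<le> K\<close> \<open>0 \<le> J A\<close>] by simp
    finally show ?thesis .
  next
    case False
    hence "J z \<le> (z / A) * J A"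
      using concave_on_le_ratio_mult[OF conc \<open>J 0 = 0\<close> \<open>A > 0\<close>] by simp
    also have "\<dots> \<le> K * J A" unfolding K_def using False \<open>0 \<le> J A\<close>
      by (intro mult_right_mono ratio_le_powr_if_concave_sq_bound[OF conc mono \<open>J 0 = 0\<close> assms \<open>A > 0\<close> _ hyp]) auto
    finally show ?thesis .
  qed
  thus "J z \<le> 1 * J A * K" by (simp add: mult.commute)
qed simp

end
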